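(* Let $p$ be an odd prime, $f:\mathbb{F}_p^n\to[0,1]$ with $\mathbb{E}[f]=\alpha\ge59/60$, $\gamma=1-\alpha>0$, and $\epsilon>0$. Suppose $H$ is a subspace of $\mathbb{F}_p^n$ with $|H|>\max(\gamma^{-3},4/\epsilon)$ and $\lambda(H)<\alpha^3-\epsilon$. Then there is a subspace $H'\subseteq H$ with $\mathrm{Codim}(H')\le\mathrm{Codim}(H)+p^{\mathrm{Codim}(H)}\cdot144/\epsilon^2$ such that $$b(H')-\alpha^3\ge\Big(1+\frac{1}{36\gamma}\Big)(b(H)-\alpha^3)+\frac{\epsilon}{20\gamma}.$$
   Context: For $f:\mathbb{F}_p^n\to[0,1]$ and a subspace $H$, $\mathrm{Codim}(H)=n-\dim H$; for $g\in\mathbb{F}_p^n$, $\alpha(H+g)=\mathbb{E}_{x\in H+g}f(x)$; the mean cube density is $b(H)=\mathbb{E}_{g\in\mathbb{F}_p^n}[\alpha(H+g)^3]$. The density of 3-APs with nonzero common difference in $H$ is $\lambda(H)=\mathbb{E}_{x\in\mathbb{F}_p^n}\mathbb{E}_{d\in H\setminus\{0\}}[f(x)f(x+d)f(x+2d)]$. *)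

theory Defs
  imports "Berlekamp_Zassenhaus.Finite_Field" "HOL-Library.Function_Algebras"
begin

text \<open>The vector space F_p^n is modelled as functions 'n \<Rightarrow> 'p mod_ring, with
  'n a finite index type (n = CARD('n)) and 'p a type of prime cardinality p.\<close>

definition Fscale :: "'p::prime_card mod_ring \<Rightarrow> ('n \<Rightarrow> 'p mod_ring) \<Rightarrow> ('n \<Rightarrow> 'p mod_ring)" where
  "Fscale c v = (\<lambda>i. c * v i)"

global_interpretation Fp: vector_space Fscale
  by unfold_locales (auto simp: Fscale_def fun_eq_iff algebra_simps)

definition codim :: "('n::finite \<Rightarrow> 'p::prime_card mod_ring) set \<Rightarrow> nat" where
  "codim H = CARD('n) - Fp.dim H"

definition mean :: "(('n::finite \<Rightarrow> 'p::prime_card mod_ring) \<Rightarrow> real) \<Rightarrow> real" where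
  "mean f = (\<Sum>x\<in>UNIV. f x) / real (CARD('n \<Rightarrow> 'p mod_ring))"

definition coset_density :: "(('n::finite \<Rightarrow> 'p::prime_card mod_ring) \<Rightarrow> real) \<Rightarrow> ('n \<Rightarrow> 'p mod_ring) set \<Rightarrow> ('n \<Rightarrow> 'p mod_ring) \<Rightarrow> real" where
  "coset_density f H g = (\<Sum>x\<in>(\<lambda>h. h + g) ` H. f x) / real (card ((\<lambda>h. h + g) ` H))"

definition mean_cube :: "(('n::finite \<Rightarrow> 'p::prime_card mod_ring) \<Rightarrow> real) \<Rightarrow> ('n \<Rightarrow> 'p mod_ring) set \<Rightarrow> real" where
  "mean_cube f H = (\<Sum>g\<in>UNIV. (coset_density f H g) ^ 3) / real (CARD('n \<Rightarrow> 'p mod_ring))"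

definition ap3_density :: "(('n::finite \<Rightarrow> 'p::prime_card mod_ring) \<Rightarrow> real) \<Rightarrow> ('n \<Rightarrow> 'p mod_ring) set \<Rightarrow> real" where
  "ap3_density f H = (\<Sum>x\<in>UNIV. (\<Sum>d\<in>H - {0}. f x * f (x + d) * f (x + 2 * d)) / real (card (H - {0})))
      / real (CARD('n \<Rightarrow> 'p mod_ring))"

end

theory Submission
  imports Defs
begin

text \<open>
  Write a(g) for the density of f on the coset g + H. Fourier analysis on H shows that the
  deficit a(g)^3 - (count of 3-APs in g + H) / |H|^2 only sees frequencies \<eta> outside the
  annihilator of H at which some translate of f has a large coefficient. Let H' be the part of H
  annihilated by all these frequencies. By Parseval there are few of them modulo the annihilator
  of H, so H' has small codimension; and on each coset the deficit is at most
  \<delta> (1 - a(g)) + (1 - a(g)) V(g), where V(g) is the variance of the densities of f on the cosets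
  of H' inside g + H. Since \<lambda>(H) < \<alpha>^3 - \<epsilon>, the deficits add up to about \<epsilon>. The variances
  are exactly what makes the mean cube density grow from H to H' (convexity of t^3), and an
  elementary pointwise inequality trading (1 - a) V against 2 \<gamma> a V and (a - \<alpha>)^2 (a + 2\<alpha>)
  turns this into the stated increment.
\<close>

section \<open>Additive characters\<close>

definition dot :: "('n::finite \<Rightarrow> 'p::prime_card mod_ring) \<Rightarrow> ('n \<Rightarrow> 'p mod_ring) \<Rightarrow> 'p mod_ring" where
  "dot u v = (\<Sum>i\<in>UNIV. u i * v i)"

definition add_char :: "'p::prime_card mod_ring \<Rightarrow> complex" where
  "add_char c = cis (2 * pi * real_of_int (to_int_mod_ring c) / real CARD('p))"

lemma cis_2pi_int_mod:
  assumes "m > 0"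
  shows "cis (2 * pi * real_of_int (k mod int m) / real m) = cis (2 * pi * real_of_int k / real m)"
proof -
  have "2 * pi * real_of_int (k mod int m) / real m = 2 * pi * real_of_int k / real m - 2 * pi * real_of_int (k div int m)"
    using assms by (simp add: minus_div_mult_eq_mod[symmetric] field_simps)
  then show ?thesis by (simp add: cis_divide[symmetric])
qed

lemma add_char_add: "add_char (a + b) = add_char a * add_char (b :: 'p::prime_card mod_ring)"
  by (simp add: add_char_def to_int_mod_ring_add cis_2pi_int_mod cis_mult add_divide_distrib distrib_left)

lemma add_char_0 [simp]: "add_char 0 = 1"
  by (simp add: add_char_def)

lemma norm_add_char [simp]: "norm (add_char c) = 1"
  by (simp add: add_char_def)

lemma add_char_uminus: "add_char (- c) = cnj (add_char c)"
proof -
  have "add_char (- c) * add_char c = 1"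
    by (simp flip: add_char_add)
  then have "add_char (- c) = inverse (add_char c)"
    using inverse_unique[of "add_char c" "add_char (- c)"] by (simp add: mult.commute)
  then show ?thesis
    by (simp add: add_char_def cis_cnj cis_inverse)
qed

lemma cnj_add_char_mult: "cnj (add_char c) * add_char c = 1"
  by (simp flip: add_char_uminus add_char_add)

lemma add_char_diff: "add_char (a - b) = add_char a * cnj (add_char b)"
  using add_char_add[of a "- b"] add_char_uminus[of b] by simp

lemma add_char_eq_1_iff: "add_char c = 1 \<longleftrightarrow> c = (0 :: 'p::prime_card mod_ring)"
proof
  assume "add_char c = 1"
  obtain k where k: "k < CARD('p)" "c = of_nat k"
    using surj_of_nat_mod_ring by blast
  then have "to_int_mod_ring c = int k"
    by (simp add: of_nat_of_int_mod_ring)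
  then have "cis (2 * pi * real k / real CARD('p)) = cis (2 * pi * real 0 / real CARD('p))"
    using \<open>add_char c = 1\<close> by (simp add: add_char_def)
  moreover have "inj_on (\<lambda>k. cis (2 * pi * real k / real CARD('p))) {..<CARD('p)}"
    using bij_betw_roots_unity[of "CARD('p)"] by (simp add: bij_betw_def)
  ultimately have "k = 0"
    using k(1) inj_onD[of _ _ k 0] by fastforce
  then show "c = 0"
    using k(2) by simp
qed simp

lemma dot_add_left: "dot (u + v) w = dot u w + dot v w"
  unfolding dot_def by (simp add: distrib_right sum.distrib)

lemma dot_add_right: "dot u (v + w) = dot u v + dot u w"
  unfolding dot_def by (simp add: distrib_left sum.distrib)

lemma dot_uminus_left: "dot (- u) v = - dot u v"
  unfolding dot_def by (simp add: sum_negf)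

lemma dot_uminus_right: "dot u (- v) = - dot u v"
  unfolding dot_def by (simp add: sum_negf)

lemma dot_diff_right: "dot u (v - w) = dot u v - dot u w"
  unfolding dot_def by (simp add: right_diff_distrib sum_subtractf)

lemma dot_scale_left: "dot (Fscale c u) v = c * dot u v"
  unfolding dot_def Fscale_def by (simp add: sum_distrib_left algebra_simps)

lemma dot_commute: "dot u v = dot v u"
  unfolding dot_def by (simp add: mult.commute)

lemma dot_0_left [simp]: "dot 0 u = 0"
  unfolding dot_def by simp

definition annihilator :: "('n::finite \<Rightarrow> 'p::prime_card mod_ring) set \<Rightarrow> ('n \<Rightarrow> 'p mod_ring) set" where
  "annihilator S = {\<xi>. \<forall>h\<in>S. dot \<xi> h = 0}"

lemma subspace_annihilator: "Fp.subspace (annihilator S)"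
  unfolding annihilator_def
  by (rule Fp.subspaceI) (simp_all add: dot_add_left dot_scale_left)

lemma annihilator_UNIV: "annihilator UNIV = {0 :: 'n::finite \<Rightarrow> 'p::prime_card mod_ring}"
proof (intro equalityI subsetI)
  fix \<xi> :: "'n \<Rightarrow> 'p mod_ring"
  assume \<xi>: "\<xi> \<in> annihilator UNIV"
  have "\<xi> i = dot \<xi> (\<lambda>j. if j = i then 1 else 0)" for i
    unfolding dot_def by (simp add: if_distrib cong: if_cong)
  then show "\<xi> \<in> {0}"
    using \<xi> by (auto simp: annihilator_def fun_eq_iff)
qed (simp add: annihilator_def)

lemma annihilator_double_iff:
  fixes \<xi> :: "'n::finite \<Rightarrow> 'p::prime_card mod_ring"
  assumes "(2 :: 'p mod_ring) \<noteq> 0"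
  shows "- (\<xi> + \<xi>) \<in> annihilator S \<longleftrightarrow> \<xi> \<in> annihilator S"
proof -
  have "dot (- (\<xi> + \<xi>)) h = - (2 * dot \<xi> h)" for h
    by (simp only: dot_uminus_left dot_add_left mult_2)
  then have "dot (- (\<xi> + \<xi>)) h = 0 \<longleftrightarrow> dot \<xi> h = 0" for h
    by (simp only: neg_equal_0_iff_equal mult_eq_0_iff) (use assms in blast)
  then show ?thesis
    unfolding annihilator_def by blast
qed

lemma sum_translate:
  fixes G :: "'a::ab_group_add set"
  assumes "finite G" and add_closed: "\<And>x y. x \<in> G \<Longrightarrow> y \<in> G \<Longrightarrow> x + y \<in> G" and "a \<in> G"
  shows "(\<Sum>h\<in>G. F (h + a)) = (\<Sum>h\<in>G. F h)"
proof -
  have inj: "inj_on (\<lambda>h. h + a) G"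
    by (auto simp: inj_on_def)
  moreover have "(\<lambda>h. h + a) ` G \<subseteq> G"
    using add_closed \<open>a \<in> G\<close> by auto
  ultimately have "(\<lambda>h. h + a) ` G = G"
    using \<open>finite G\<close> by (simp add: card_image card_subset_eq)
  then show ?thesis
    using sum.reindex[OF inj, of F] by simp
qed

lemma sum_UNIV_translate: "(\<Sum>g\<in>UNIV. F (g + a)) = (\<Sum>g\<in>UNIV. F g)"
  for a :: "'a::{finite, ab_group_add}"
  by (rule sum_translate) simp_all

lemma sum_add_char_subspace:
  assumes "Fp.subspace V"
  shows "(\<Sum>h\<in>V. add_char (dot \<xi> h)) = (if \<xi> \<in> annihilator V then of_nat (card V) else 0)"
proof (cases "\<xi> \<in> annihilator V")
  case False
  then obtain a where a: "a \<in> V" "dot \<xi> a \<noteq> 0"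
    by (auto simp: annihilator_def)
  let ?S = "\<Sum>h\<in>V. add_char (dot \<xi> h)"
  have "?S = (\<Sum>h\<in>V. add_char (dot \<xi> (h + a)))"
    by (rule sum_translate[OF finite Fp.subspace_add[OF assms] a(1), symmetric])
  also have "\<dots> = add_char (dot \<xi> a) * ?S"
    by (simp add: dot_add_right add_char_add sum_distrib_left mult.commute)
  finally have "(add_char (dot \<xi> a) - 1) * ?S = 0"
    by (simp add: algebra_simps)
  then show ?thesis
    using False a(2) by (simp add: add_char_eq_1_iff)
qed (simp add: annihilator_def)

lemma sum_add_char_UNIV:
  "(\<Sum>\<xi>\<in>UNIV. add_char (dot \<xi> x)) = (if x = 0 then of_nat CARD('n \<Rightarrow> 'p mod_ring) else 0)"
  for x :: "'n::finite \<Rightarrow> 'p::prime_card mod_ring"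
  using sum_add_char_subspace[OF Fp.subspace_UNIV, of x] by (simp add: dot_commute annihilator_UNIV)

section \<open>Cardinalities of subspaces\<close>

lemma card_le_card_image_mult:
  assumes "finite A" and "\<And>y. y \<in> f ` A \<Longrightarrow> card {x \<in> A. f x = y} \<le> k"
  shows "card A \<le> card (f ` A) * k"
proof -
  have "card A = card (\<Union>y\<in>f ` A. {x \<in> A. f x = y})"
    by (rule arg_cong[where f=card]) auto
  also have "\<dots> \<le> (\<Sum>y\<in>f ` A. card {x \<in> A. f x = y})"
    using \<open>finite A\<close> by (intro card_UN_le) simp
  also have "\<dots> \<le> (\<Sum>y\<in>f ` A. k)"
    using assms(2) by (rule sum_mono)
  finally show ?thesis
    by simp
qed

lemma card_span_independent:
  fixes B :: "('n::finite \<Rightarrow> 'p::prime_card mod_ring) set"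
  shows "Fp.independent B \<Longrightarrow> card (Fp.span B) = CARD('p) ^ card B"
proof (induction B rule: finite_induct[OF finite])
  case (2 x B)
  have x_notin: "x \<notin> Fp.span B"
    using 2(2,4) by (simp add: Fp.independent_insert)
  let ?m = "\<lambda>(y, c). y + Fscale c x"
  have image: "?m ` (Fp.span B \<times> UNIV) = Fp.span (insert x B)"
  proof (intro equalityI subsetI)
    fix z assume "z \<in> ?m ` (Fp.span B \<times> UNIV)"
    then show "z \<in> Fp.span (insert x B)"
      by (auto intro: Fp.span_add Fp.span_scale Fp.span_base Fp.span_mono[THEN subsetD, of B])
  next
    fix z assume "z \<in> Fp.span (insert x B)"
    then obtain k where "z - Fscale k x \<in> Fp.span B"
      using Fp.span_insert by blast
    then show "z \<in> ?m ` (Fp.span B \<times> UNIV)"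
      by (intro image_eqI[where x="(z - Fscale k x, k)"]) auto
  qed
  have "inj_on ?m (Fp.span B \<times> UNIV)"
  proof (rule inj_onI, clarsimp)
    fix y c y' c'
    assume y: "y \<in> Fp.span B" "y' \<in> Fp.span B" and eq: "y + Fscale c x = y' + Fscale c' x"
    show "y = y' \<and> c = c'"
    proof (cases "c = c'")
      case False
      have "Fscale (c - c') x = y' - y"
        using eq by (simp add: Fp.scale_left_diff_distrib algebra_simps)
      then have "Fscale (inverse (c - c')) (Fscale (c - c') x) \<in> Fp.span B"
        using y by (simp add: Fp.span_diff Fp.span_scale)
      with False x_notin show ?thesis
        by simp
    qed (use eq in simp)
  qed
  then have "card (Fp.span (insert x B)) = card (Fp.span B) * CARD('p)"
    by (simp flip: image add: card_image card_cartesian_product)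
  with 2 show ?case
    using Fp.independent_mono by fastforce
qed simp

lemma card_subspace: "Fp.subspace V \<Longrightarrow> card V = CARD('p) ^ Fp.dim V"
  for V :: "('n::finite \<Rightarrow> 'p::prime_card mod_ring) set"
  by (metis Fp.basis_exists Fp.span_minimal Fp.span_subspace card_span_independent)

lemma subspace_nonempty: "Fp.subspace V \<Longrightarrow> V \<noteq> {}"
  using Fp.subspace_0 by blast

lemma card_subspace_gt_0: "Fp.subspace V \<Longrightarrow> card V > 0"
  for V :: "('n::finite \<Rightarrow> 'p::prime_card mod_ring) set"
  by (simp add: card_gt_0_iff subspace_nonempty)

lemma dim_subspace_le: "Fp.subspace V \<Longrightarrow> Fp.dim V \<le> CARD('n)"
  for V :: "('n::finite \<Rightarrow> 'p::prime_card mod_ring) set"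
proof -
  assume "Fp.subspace V"
  then have "CARD('p) ^ Fp.dim V \<le> CARD('p) ^ CARD('n)"
    using card_mono[of UNIV V] by (simp add: card_subspace card_fun)
  then show ?thesis
    using prime_card[where 'a='p] prime_gt_1_nat power_le_imp_le_exp by blast
qed

lemma card_UNIV_eq_card_subspace_codim:
  "Fp.subspace V \<Longrightarrow> CARD('n \<Rightarrow> 'p mod_ring) = card V * CARD('p) ^ codim V"
  for V :: "('n::finite \<Rightarrow> 'p::prime_card mod_ring) set"
  by (simp add: card_fun codim_def card_subspace dim_subspace_le flip: power_add)

section \<open>Coset densities\<close>

lemma coset_density_eq: "Fp.subspace V \<Longrightarrow> coset_density f V g = (\<Sum>h\<in>V. f (g + h)) / real (card V)"
  by (simp add: coset_density_def sum.reindex card_image inj_on_def add.commute)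

lemma coset_density_bounds:
  assumes "Fp.subspace V" and "\<And>x. 0 \<le> f x \<and> f x \<le> 1"
  shows "0 \<le> coset_density f V g \<and> coset_density f V g \<le> 1"
proof -
  have "0 \<le> (\<Sum>h\<in>V. f (g + h))" "(\<Sum>h\<in>V. f (g + h)) \<le> real (card V)"
    using assms(2) sum_mono[of V "\<lambda>h. f (g + h)" "\<lambda>_. 1"] by (auto intro: sum_nonneg)
  then show ?thesis
    using card_subspace_gt_0[OF assms(1)] by (simp add: coset_density_eq[OF assms(1)])
qed

lemma sum_cosets:
  "Fp.subspace V \<Longrightarrow> (\<Sum>g\<in>UNIV. \<Sum>h\<in>V. F (g + h)) = real (card V) * (\<Sum>x\<in>UNIV. F x)"
  for V :: "('n::finite \<Rightarrow> 'p::prime_card mod_ring) set"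
  by (subst sum.swap) (simp add: sum_UNIV_translate)

lemma sum_coset_density:
  "Fp.subspace V \<Longrightarrow> (\<Sum>g\<in>UNIV. coset_density f V g) = (\<Sum>x\<in>UNIV. f x)"
  by (simp add: coset_density_eq sum_cosets subspace_nonempty flip: sum_divide_distrib)

lemma mean_cube_sub_cube_mean:
  fixes f :: "('n::finite \<Rightarrow> 'p::prime_card mod_ring) \<Rightarrow> real"
  assumes "Fp.subspace V"
  shows "real CARD('n \<Rightarrow> 'p mod_ring) * (mean_cube f V - mean f ^ 3)
    = (\<Sum>g\<in>UNIV. (coset_density f V g - mean f)\<^sup>2 * (coset_density f V g + 2 * mean f))"
proof -
  let ?N = "real CARD('n \<Rightarrow> 'p mod_ring)" and ?a = "coset_density f V" and ?\<alpha> = "mean f"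
  have "?N * (mean_cube f V - ?\<alpha> ^ 3) = (\<Sum>g\<in>UNIV. ?a g ^ 3 - ?\<alpha> ^ 3)"
    by (simp add: mean_cube_def sum_subtractf right_diff_distrib)
  also have "\<dots> = (\<Sum>g\<in>UNIV. (?a g - ?\<alpha>)\<^sup>2 * (?a g + 2 * ?\<alpha>) + 3 * ?\<alpha>\<^sup>2 * (?a g - ?\<alpha>))"
    by (intro sum.cong refl) (simp add: power2_eq_square power3_eq_cube algebra_simps)
  also have "\<dots> = (\<Sum>g\<in>UNIV. (?a g - ?\<alpha>)\<^sup>2 * (?a g + 2 * ?\<alpha>)) + 3 * ?\<alpha>\<^sup>2 * ((\<Sum>g\<in>UNIV. ?a g) - ?N * ?\<alpha>)"
    by (simp add: sum.distrib sum_subtractf sum_distrib_left right_diff_distrib)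
  also have "(\<Sum>g\<in>UNIV. ?a g) = ?N * ?\<alpha>"
    by (simp add: sum_coset_density[OF assms] mean_def)
  finally show ?thesis
    by simp
qed

lemma coset_density_translate:
  "Fp.subspace V \<Longrightarrow> coset_density (\<lambda>x. f (g + x)) V h = coset_density f V (g + h)"
  by (simp add: coset_density_eq add.assoc)

lemma sum_coset_density_refine:
  assumes "Fp.subspace H" "Fp.subspace H'" "H' \<subseteq> H"
  shows "(\<Sum>h\<in>H. coset_density f H' (g + h)) = (\<Sum>h\<in>H. f (g + h))"
proof -
  have "(\<Sum>h\<in>H. coset_density f H' (g + h)) = (\<Sum>h'\<in>H'. \<Sum>h\<in>H. f (g + (h + h'))) / real (card H')"
    by (simp add: coset_density_eq[OF assms(2)] sum_divide_distrib sum.swap[of _ H'] add.assoc)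
  also have "\<dots> = (\<Sum>h'\<in>H'. \<Sum>h\<in>H. f (g + h)) / real (card H')"
    using assms(3) by (intro arg_cong[where f="\<lambda>x. x / _"] sum.cong refl
        sum_translate[OF finite Fp.subspace_add[OF assms(1)]]) auto
  also have "\<dots> = (\<Sum>h\<in>H. f (g + h))"
    using Fp.subspace_0[OF assms(2)] by auto
  finally show ?thesis .
qed

definition refinement_variance ::
    "(('n::finite \<Rightarrow> 'p::prime_card mod_ring) \<Rightarrow> real) \<Rightarrow> ('n \<Rightarrow> 'p mod_ring) set \<Rightarrow> ('n \<Rightarrow> 'p mod_ring) set \<Rightarrow> ('n \<Rightarrow> 'p mod_ring) \<Rightarrow> real" where
  "refinement_variance f H H' g =
     (\<Sum>h\<in>H. (coset_density f H' (g + h) - coset_density f H g)\<^sup>2) / real (card H)"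

lemma refinement_variance_nonneg: "0 \<le> refinement_variance f H H' g"
  by (simp add: refinement_variance_def sum_nonneg)

section \<open>Elementary inequalities\<close>

lemma three_mult_ge:
  fixes a b c :: real
  assumes "0 \<le> a" "a \<le> 1" "0 \<le> b" "b \<le> 1" "0 \<le> c" "c \<le> 1"
  shows "a + b + c - 2 \<le> a * b * c"
proof -
  have "0 \<le> (1 - a) * (1 - b)" "0 \<le> (1 - a * b) * (1 - c)"
    using assms by (simp_all add: mult_le_one)
  then show ?thesis
    by (simp add: algebra_simps)
qed

lemma sum_ap_ge:
  fixes f :: "'a::{finite, ring_1} \<Rightarrow> real"
  assumes "\<And>x. 0 \<le> f x \<and> f x \<le> 1"
  shows "real (card S) * (3 * (\<Sum>x\<in>UNIV. f x) - 2 * real CARD('a))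
    \<le> (\<Sum>x\<in>UNIV. \<Sum>d\<in>S. f x * f (x + d) * f (x + 2 * d))"
proof -
  have per_d: "(\<Sum>x\<in>UNIV. f x + f (x + d) + f (x + 2 * d) - 2) = 3 * (\<Sum>x\<in>UNIV. f x) - 2 * real CARD('a)"
    for d
    by (simp add: sum.distrib sum_subtractf sum_UNIV_translate)
  have "real (card S) * (3 * (\<Sum>x\<in>UNIV. f x) - 2 * real CARD('a))
      = (\<Sum>d\<in>S. \<Sum>x\<in>UNIV. f x + f (x + d) + f (x + 2 * d) - 2)"
    by (simp add: per_d)
  also have "\<dots> = (\<Sum>x\<in>UNIV. \<Sum>d\<in>S. f x + f (x + d) + f (x + 2 * d) - 2)"
    by (rule sum.swap)
  also have "\<dots> \<le> (\<Sum>x\<in>UNIV. \<Sum>d\<in>S. f x * f (x + d) * f (x + 2 * d))"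
    using assms by (intro sum_mono three_mult_ge) auto
  finally show ?thesis .
qed

lemma trivial_ap_correction_le:
  fixes K N S C D :: real
  assumes "2 \<le> K" "N > 0" "C \<le> S" "(K - 1) * (3 * S - 2 * N) \<le> D"
  shows "K * (D + C) / K ^ 2 \<le> N * (D / (K - 1) / N) + 2 * N * (1 - S / N) / K"
proof -
  define X where "X = D / (K - 1)"
  have "3 * S - 2 * N \<le> X" and D: "D = (K - 1) * X"
    using assms by (simp_all add: X_def pos_le_divide_eq mult.commute)
  then have "D + C \<le> K * X + 2 * (N - S)"
    using assms(3) by (simp add: algebra_simps)
  then have "(D + C) / K \<le> (K * X + 2 * (N - S)) / K"
    using assms(1) by (intro divide_right_mono) auto
  also have "\<dots> = X + 2 * (N - S) / K"
    using assms(1) by (simp add: add_divide_distrib)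
  finally show ?thesis
    using assms(1,2) by (simp add: X_def power2_eq_square right_diff_distrib)
qed

lemma sum_sq_deviation_le:
  fixes x :: "'a \<Rightarrow> real"
  assumes "\<And>i. i \<in> I \<Longrightarrow> 0 \<le> x i \<and> x i \<le> 1" and mean: "(\<Sum>i\<in>I. x i) = real (card I) * a"
  shows "(\<Sum>i\<in>I. (x i - a)\<^sup>2) \<le> real (card I) * a * (1 - a)"
proof -
  have "(\<Sum>i\<in>I. (x i - a)\<^sup>2) = (\<Sum>i\<in>I. (x i)\<^sup>2) - 2 * a * (\<Sum>i\<in>I. x i) + real (card I) * a\<^sup>2"
    by (simp add: power2_diff sum.distrib sum_subtractf sum_distrib_left sum_distrib_right mult_ac)
  also have "(\<Sum>i\<in>I. (x i)\<^sup>2) \<le> (\<Sum>i\<in>I. x i)"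
    using assms(1) by (intro sum_mono) (simp add: power2_eq_square mult_left_le)
  finally show ?thesis
    unfolding mean by (simp add: power2_eq_square algebra_simps)
qed

lemma sum_cube_ge_sq_deviation:
  fixes x :: "'a \<Rightarrow> real"
  assumes "\<And>i. i \<in> I \<Longrightarrow> 0 \<le> x i" and mean: "(\<Sum>i\<in>I. x i) = real (card I) * a"
  shows "2 * a * (\<Sum>i\<in>I. (x i - a)\<^sup>2) \<le> (\<Sum>i\<in>I. (x i)^3) - real (card I) * a ^ 3"
proof -
  have "2 * a * (x i - a)\<^sup>2 \<le> (x i)^3 - a ^ 3 - 3 * a\<^sup>2 * (x i - a)" if "i \<in> I" for i
  proof -
    have "(x i - a)\<^sup>2 * (2 * a) \<le> (x i - a)\<^sup>2 * (x i + 2 * a)"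
      using assms(1)[OF that] by (intro mult_left_mono) auto
    then show ?thesis
      by (simp add: power2_eq_square power3_eq_cube algebra_simps)
  qed
  then have "2 * a * (\<Sum>i\<in>I. (x i - a)\<^sup>2) \<le> (\<Sum>i\<in>I. (x i)^3 - a ^ 3 - 3 * a\<^sup>2 * (x i - a))"
    by (simp add: sum_distrib_left sum_mono)
  also have "\<dots> = (\<Sum>i\<in>I. (x i)^3) - real (card I) * a ^ 3"
    by (simp add: sum_subtractf sum_distrib_left[symmetric] mean)
  finally show ?thesis .
qed

lemma max_variance_le_cube_excess:
  fixes a \<gamma> \<mu> :: real
  assumes a: "0 \<le> a" "a \<le> 1" and \<gamma>: "0 < \<gamma>" "\<gamma> \<le> 1/60" and \<mu>: "1/20 \<le> \<mu>" "\<mu> \<le> 36/713"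
    and gt: "2 * \<gamma> * a < \<mu> * (1 - a)"
  shows "\<mu> * a * (1 - a)\<^sup>2 \<le> (\<mu> - 1/36) * (1 - a - \<gamma>)\<^sup>2 * (a + 2 * (1 - \<gamma>))"
proof -
  define s where "s = 1 - a"
  have s: "0 \<le> s" "s \<le> 1"
    using a by (auto simp: s_def)
  have \<mu>': "1/45 \<le> \<mu> - 1/36"
    using \<mu> by simp
  have third: "a + 59/30 \<le> a + 2 * (1 - \<gamma>)"
    using \<gamma> by simp
  show ?thesis
  proof (cases "a < 1/4")
    case True
    have "\<mu> * a * s\<^sup>2 \<le> (36/713) * (1/4) * 1"
      using True a s \<mu> by (intro mult_mono) (auto simp: power_le_one)
    also have "\<dots> \<le> (1/45) * (11/15)\<^sup>2 * (59/30)"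
      by (simp add: power2_eq_square)
    also have "\<dots> \<le> (\<mu> - 1/36) * (s - \<gamma>)\<^sup>2 * (a + 2 * (1 - \<gamma>))"
    proof -
      have "(11/15)\<^sup>2 \<le> (s - \<gamma>)\<^sup>2"
        using True \<gamma> by (intro power_mono) (auto simp: s_def)
      then show ?thesis
        using \<mu>' third a by (intro mult_mono) auto
    qed
    finally show ?thesis
      by (simp add: s_def)
  next
    case False
    have "\<gamma> * (1/2) \<le> 2 * \<gamma> * a"
      using False \<gamma> by simp
    with gt have "\<gamma> < 2 * \<mu> * s"
      by (simp add: s_def)
    moreover have "2 * \<mu> * s \<le> 2 * (36/713) * s"
      using \<mu> s by (intro mult_right_mono) auto
    ultimately have "s * (641/713) \<le> s - \<gamma>"
      by simp
    then have "(s * (641/713))\<^sup>2 \<le> (s - \<gamma>)\<^sup>2"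
      using s by (intro power_mono) auto
    have "\<mu> * a * s\<^sup>2 \<le> (36/713) * a * s\<^sup>2"
      using \<mu> a by (intro mult_right_mono) auto
    also have "\<dots> \<le> (1/45) * (641/713)\<^sup>2 * (a + 59/30) * s\<^sup>2"
      using a by (intro mult_right_mono) (simp_all add: power2_eq_square)
    also have "\<dots> = (1/45) * (s * (641/713))\<^sup>2 * (a + 59/30)"
      by (simp add: power2_eq_square)
    also have "\<dots> \<le> (\<mu> - 1/36) * (s - \<gamma>)\<^sup>2 * (a + 2 * (1 - \<gamma>))"
      using \<mu>' third a \<open>(s * (641/713))\<^sup>2 \<le> (s - \<gamma>)\<^sup>2\<close> by (intro mult_mono) auto
    finally show ?thesis
      by (simp add: s_def)
  qed
qed

lemma variance_deficit_tradeoff: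
  fixes a V \<gamma> \<mu> :: real
  assumes a: "0 \<le> a" "a \<le> 1" and V: "0 \<le> V" "V \<le> a * (1 - a)"
    and \<gamma>: "0 < \<gamma>" "\<gamma> \<le> 1/60" and \<mu>: "1/20 \<le> \<mu>" "\<mu> \<le> 36/713"
  shows "\<mu> * (1 - a) * V \<le> 2 * \<gamma> * a * V + (\<mu> - 1/36) * (a - (1 - \<gamma>))\<^sup>2 * (a + 2 * (1 - \<gamma>))"
proof -
  have "(a - (1 - \<gamma>))\<^sup>2 = (1 - a - \<gamma>)\<^sup>2"
    by (simp add: power2_eq_square algebra_simps)
  moreover have "0 \<le> (\<mu> - 1/36) * (1 - a - \<gamma>)\<^sup>2 * (a + 2 * (1 - \<gamma>))"
    using a \<gamma> \<mu> by simp
  moreover have "\<mu> * (1 - a) * V \<le> 2 * \<gamma> * a * V + \<mu> * a * (1 - a)\<^sup>2" if "2 * \<gamma> * a < \<mu> * (1 - a)"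
  proof -
    have "(\<mu> * (1 - a) - 2 * \<gamma> * a) * V \<le> (\<mu> * (1 - a) - 2 * \<gamma> * a) * (a * (1 - a))"
      using that V by (intro mult_left_mono) auto
    also have "\<dots> = \<mu> * a * (1 - a)\<^sup>2 - 2 * \<gamma> * a * (a * (1 - a))"
      by (simp add: power2_eq_square algebra_simps)
    also have "\<dots> \<le> \<mu> * a * (1 - a)\<^sup>2"
      using a \<gamma> by simp
    finally show ?thesis
      by (simp add: algebra_simps)
  qed
  moreover have "\<mu> * (1 - a) * V \<le> 2 * \<gamma> * a * V" if "\<mu> * (1 - a) \<le> 2 * \<gamma> * a"
    using that V by (intro mult_right_mono) auto
  ultimately show ?thesis
    using max_variance_le_cube_excess[OF a \<gamma> \<mu>] by fastforce
qed

text \<open>The constant 36/713 is 1/(20 \<cdot> 713/720), and 713/720 bounds 1 - 7\<gamma>/12 from below for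
  \<gamma> \<le> 1/60: the factor lost when the error terms \<delta>\<gamma> and 2\<gamma>/|H| are absorbed into \<epsilon>.\<close>

lemma density_increment_arith:
  fixes b b' T \<Lambda> \<alpha> \<gamma> \<epsilon> K E I :: real
  assumes deficit: "b - T \<le> \<epsilon> / 12 * \<gamma> + E" and ap: "T \<le> \<Lambda> + 2 * \<gamma> / K"
    and tradeoff: "36/713 * E \<le> \<gamma> * I + (36/713 - 1/36) * (b - \<alpha> ^ 3)"
    and increment: "I \<le> b' - b"
    and ap3: "\<Lambda> < \<alpha> ^ 3 - \<epsilon>" and K: "4 / \<epsilon> < K" and "\<epsilon> > 0"
    and \<gamma>: "0 < \<gamma>" "\<gamma> \<le> 1/60"
  shows "(1 + 1 / (36 * \<gamma>)) * (b - \<alpha> ^ 3) + \<epsilon> / (20 * \<gamma>) \<le> b' - \<alpha> ^ 3"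
proof -
  define B where "B = b - \<alpha> ^ 3"
  have "0 < 4 / \<epsilon>"
    using \<open>\<epsilon> > 0\<close> by simp
  then have "0 < K"
    using K by linarith
  moreover have "\<gamma> * 4 \<le> \<gamma> * (K * \<epsilon>)"
    using K \<open>\<epsilon> > 0\<close> \<gamma> by (simp add: field_simps)
  ultimately have "2 * \<gamma> / K \<le> \<gamma> * \<epsilon> / 2"
    by (simp add: field_simps)
  also have "\<dots> \<le> \<epsilon> / 120"
    using \<gamma> \<open>\<epsilon> > 0\<close> by simp
  finally have "2 * \<gamma> / K \<le> \<epsilon> / 120" .
  moreover have "\<epsilon> / 12 * \<gamma> \<le> \<epsilon> / 720"
    using \<gamma> \<open>\<epsilon> > 0\<close> by simp
  ultimately have "713 / 720 * \<epsilon> < E - B"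
    using deficit ap ap3 unfolding B_def by linarith
  moreover have "\<gamma> * I \<le> \<gamma> * b' - \<gamma> * b"
    using mult_left_mono[OF increment, of \<gamma>] \<gamma> by (simp add: right_diff_distrib)
  moreover have "36/713 * E \<le> \<gamma> * I + (36/713 - 1/36) * B"
    using tradeoff by (simp add: B_def)
  ultimately have "\<epsilon> / 20 + B / 36 < \<gamma> * b' - \<gamma> * b"
    by (simp add: algebra_simps)
  then have "\<epsilon> / (20 * \<gamma>) + B / (36 * \<gamma>) < b' - b"
    using \<gamma> by (simp add: field_simps)
  then show ?thesis
    by (simp add: B_def algebra_simps)
qed

section \<open>Fourier coefficients on a subspace\<close>

definition fourier_on ::
    "('n::finite \<Rightarrow> 'p::prime_card mod_ring) set \<Rightarrow> (('n \<Rightarrow> 'p mod_ring) \<Rightarrow> real) \<Rightarrow> ('n \<Rightarrow> 'p mod_ring) \<Rightarrow> complex" where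
  "fourier_on H \<phi> \<xi> = (\<Sum>h\<in>H. complex_of_real (\<phi> h) * add_char (dot \<xi> h))"

lemma parseval_fourier_on:
  "(\<Sum>\<xi>\<in>UNIV. (cmod (fourier_on H \<phi> \<xi>))\<^sup>2) = real CARD('n \<Rightarrow> 'p mod_ring) * (\<Sum>h\<in>H. (\<phi> h)\<^sup>2)"
  for H :: "('n::finite \<Rightarrow> 'p::prime_card mod_ring) set"
proof -
  let ?N = "CARD('n \<Rightarrow> 'p mod_ring)"
  have "complex_of_real (\<Sum>\<xi>\<in>UNIV. (cmod (fourier_on H \<phi> \<xi>))\<^sup>2)
      = (\<Sum>\<xi>\<in>UNIV. fourier_on H \<phi> \<xi> * cnj (fourier_on H \<phi> \<xi>))"
    by (simp only: of_real_sum complex_norm_square)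
  also have "\<dots> = (\<Sum>\<xi>\<in>UNIV. \<Sum>h\<in>H. \<Sum>h'\<in>H. complex_of_real (\<phi> h * \<phi> h') * add_char (dot \<xi> (h - h')))"
    unfolding fourier_on_def cnj_sum sum_product
    by (intro sum.cong refl) (simp add: dot_diff_right add_char_diff mult_ac)
  also have "\<dots> = (\<Sum>h\<in>H. \<Sum>h'\<in>H. complex_of_real (\<phi> h * \<phi> h') * (\<Sum>\<xi>\<in>UNIV. add_char (dot \<xi> (h - h'))))"
    by (simp add: sum.swap[of _ UNIV] sum_distrib_left)
  also have "\<dots> = (\<Sum>h\<in>H. complex_of_real (\<phi> h * \<phi> h) * of_nat ?N)"
    by (simp add: sum_add_char_UNIV if_distrib sum.delta cong: if_cong)
  also have "\<dots> = complex_of_real (real ?N * (\<Sum>h\<in>H. (\<phi> h)\<^sup>2))"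
    by (simp add: sum_distrib_left power2_eq_square mult_ac)
  finally show ?thesis
    by (simp only: of_real_eq_iff)
qed

context
  fixes H :: "('n::finite \<Rightarrow> 'p::prime_card mod_ring) set"
  assumes subspace_H: "Fp.subspace H"
begin

lemma card_mult_card_annihilator: "card H * card (annihilator H) = CARD('n \<Rightarrow> 'p mod_ring)"
proof -
  let ?N = "CARD('n \<Rightarrow> 'p mod_ring)"
  have "(of_nat (card H * card (annihilator H)) :: complex) = (\<Sum>\<xi>\<in>UNIV. \<Sum>h\<in>H. add_char (dot \<xi> h))"
    by (simp add: sum_add_char_subspace[OF subspace_H] sum.If_cases Int_absorb1 mult.commute)
  also have "\<dots> = (\<Sum>h\<in>H. \<Sum>\<xi>\<in>UNIV. add_char (dot \<xi> h))"
    by (rule sum.swap)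
  also have "\<dots> = of_nat ?N"
    using Fp.subspace_0[OF subspace_H] by (simp add: sum_add_char_UNIV sum.delta)
  finally show ?thesis
    by (simp only: of_nat_eq_iff)
qed

lemma card_annihilator_eq: "real (card (annihilator H)) = real CARD('n \<Rightarrow> 'p mod_ring) / real (card H)"
  by (metis card_mult_card_annihilator card_subspace_gt_0[OF subspace_H] nonzero_mult_div_cancel_left
      of_nat_0_less_iff of_nat_mult order_less_irrefl)

lemma fourier_on_annihilator: "\<xi> \<in> annihilator H \<Longrightarrow> fourier_on H \<phi> \<xi> = complex_of_real (\<Sum>h\<in>H. \<phi> h)"
  by (simp add: fourier_on_def annihilator_def)

lemma fourier_on_diff_const:
  "\<xi> \<notin> annihilator H \<Longrightarrow> fourier_on H (\<lambda>h. \<phi> h - c) \<xi> = fourier_on H \<phi> \<xi>"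
  using sum_add_char_subspace[OF subspace_H, of \<xi>]
  by (simp add: fourier_on_def left_diff_distrib sum_subtractf flip: sum_distrib_left)

lemma norm_fourier_on_le:
  assumes "\<xi> \<notin> annihilator H" and "\<And>x. \<phi> x \<le> 1"
  shows "cmod (fourier_on H \<phi> \<xi>) \<le> real (card H) - (\<Sum>h\<in>H. \<phi> h)"
proof -
  have "cmod (fourier_on H \<phi> \<xi>) = cmod (fourier_on H (\<lambda>h. \<phi> h - 1) \<xi>)"
    using fourier_on_diff_const[OF assms(1)] by simp
  also have "\<dots> \<le> (\<Sum>h\<in>H. \<bar>\<phi> h - 1\<bar>)"
    unfolding fourier_on_def
    by (rule order_trans[OF norm_sum]) (simp add: norm_mult del: of_real_diff)
  also have "\<dots> = real (card H) - (\<Sum>h\<in>H. \<phi> h)"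
    using assms(2) by (simp add: sum_subtractf)
  finally show ?thesis .
qed

lemma fourier_on_translate:
  assumes "u \<in> H"
  shows "fourier_on H (\<lambda>h. \<phi> (h + u)) \<xi> = cnj (add_char (dot \<xi> u)) * fourier_on H \<phi> \<xi>"
proof -
  have "fourier_on H \<phi> \<xi> = (\<Sum>h\<in>H. complex_of_real (\<phi> (h + u)) * add_char (dot \<xi> (h + u)))"
    unfolding fourier_on_def by (rule sum_translate[OF finite Fp.subspace_add[OF subspace_H] assms, symmetric])
  also have "\<dots> = add_char (dot \<xi> u) * fourier_on H (\<lambda>h. \<phi> (h + u)) \<xi>"
    by (simp add: fourier_on_def dot_add_right add_char_add sum_distrib_left mult_ac)
  finally show ?thesis
    by (simp add: cnj_add_char_mult flip: mult.assoc)
qed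

lemma fourier_on_restrict_cong:
  "restrict (dot \<xi>) H = restrict (dot \<eta>) H \<Longrightarrow> fourier_on H \<phi> \<xi> = fourier_on H \<phi> \<eta>"
  unfolding fourier_on_def by (intro sum.cong refl) (metis restrict_apply')

lemma sum_fourier_on_ap:
  "(\<Sum>\<xi>\<in>UNIV. (fourier_on H \<phi> \<xi>)\<^sup>2 * fourier_on H \<phi> (- (\<xi> + \<xi>))) =
     of_nat CARD('n \<Rightarrow> 'p mod_ring) * complex_of_real (\<Sum>h\<in>H. \<Sum>d\<in>H. \<phi> h * \<phi> (h + d) * \<phi> (h + d + d))"
proof -
  let ?N = "CARD('n \<Rightarrow> 'p mod_ring)"
  let ?c = "\<lambda>a b c. complex_of_real (\<phi> a * \<phi> b * \<phi> c)"
  have char: "add_char (dot \<xi> a) * add_char (dot \<xi> b) * add_char (dot (- (\<xi> + \<xi>)) c)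
      = add_char (dot \<xi> (a + b - (c + c)))" for \<xi> a b c
    by (simp only: dot_uminus_left dot_uminus_right dot_add_left dot_add_right diff_conv_add_uminus
        add_char_add)
  have expand: "(fourier_on H \<phi> \<xi>)\<^sup>2 * fourier_on H \<phi> (- (\<xi> + \<xi>))
      = (\<Sum>c\<in>H. \<Sum>b\<in>H. \<Sum>a\<in>H. ?c a b c * add_char (dot \<xi> (a + b - (c + c))))" for \<xi>
  proof -
    have "(fourier_on H \<phi> \<xi>)\<^sup>2 * fourier_on H \<phi> (- (\<xi> + \<xi>))
        = (\<Sum>c\<in>H. \<Sum>b\<in>H. \<Sum>a\<in>H. (complex_of_real (\<phi> a) * add_char (dot \<xi> a)) *
            (complex_of_real (\<phi> b) * add_char (dot \<xi> b)) *
            (complex_of_real (\<phi> c) * add_char (dot (- (\<xi> + \<xi>)) c)))"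
      by (simp only: power2_eq_square fourier_on_def sum_distrib_left sum_distrib_right)
    then show ?thesis
      by (simp only: of_real_mult flip: char) (simp only: mult_ac)
  qed
  have "(\<Sum>\<xi>\<in>UNIV. (fourier_on H \<phi> \<xi>)\<^sup>2 * fourier_on H \<phi> (- (\<xi> + \<xi>)))
      = (\<Sum>c\<in>H. \<Sum>b\<in>H. \<Sum>a\<in>H. ?c a b c * (\<Sum>\<xi>\<in>UNIV. add_char (dot \<xi> (a + b - (c + c)))))"
    unfolding expand sum_distrib_left
    by (subst sum.swap, rule sum.cong[OF refl], subst sum.swap, rule sum.cong[OF refl], subst sum.swap, rule refl)
  also have "\<dots> = (\<Sum>c\<in>H. \<Sum>a\<in>H. \<Sum>b\<in>H. if b = c + c - a then ?c a b c * of_nat ?N else 0)"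
    by (rule sum.cong[OF refl], subst sum.swap, intro sum.cong refl)
      (auto simp: sum_add_char_UNIV algebra_simps)
  also have "\<dots> = (\<Sum>c\<in>H. \<Sum>a\<in>H. ?c a (c + c - a) c * of_nat ?N)"
  proof (intro sum.cong refl)
    fix c a assume "c \<in> H" "a \<in> H"
    then have "c + c - a \<in> H"
      by (intro Fp.subspace_diff[OF subspace_H] Fp.subspace_add[OF subspace_H])
    then show "(\<Sum>b\<in>H. if b = c + c - a then ?c a b c * of_nat ?N else 0) = ?c a (c + c - a) c * of_nat ?N"
      by (simp only: sum.delta[OF finite] if_True)
  qed
  also have "\<dots> = (\<Sum>a\<in>H. \<Sum>c\<in>H. ?c a (c + c - a) c * of_nat ?N)"
    by (rule sum.swap)
  also have "\<dots> = (\<Sum>a\<in>H. \<Sum>d\<in>H. ?c a ((d + a) + (d + a) - a) (d + a) * of_nat ?N)"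
    by (intro sum.cong refl sum_translate[OF finite Fp.subspace_add[OF subspace_H], symmetric])
  also have "\<dots> = of_nat ?N * complex_of_real (\<Sum>h\<in>H. \<Sum>d\<in>H. \<phi> h * \<phi> (h + d) * \<phi> (h + d + d))"
    by (simp add: sum_distrib_left algebra_simps)
  finally show ?thesis .
qed

lemma nonzero_spectrum_energy_le:
  assumes "\<And>x. 0 \<le> \<phi> x \<and> \<phi> x \<le> 1"
  shows "(\<Sum>\<xi>\<in>- annihilator H. (cmod (fourier_on H \<phi> \<xi>))\<^sup>2)
    \<le> real CARD('n \<Rightarrow> 'p mod_ring) * (real (card H) - (\<Sum>h\<in>H. \<phi> h))"
proof -
  let ?N = "real CARD('n \<Rightarrow> 'p mod_ring)" and ?K = "real (card H)" and ?s = "\<Sum>h\<in>H. \<phi> h"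
  have K: "?K > 0"
    using card_subspace_gt_0[OF subspace_H] by simp
  have s: "0 \<le> ?s" "?s \<le> ?K"
    using assms sum_mono[of H \<phi> "\<lambda>_. 1"] by (auto intro: sum_nonneg)
  have sq: "(\<Sum>h\<in>H. (\<phi> h)\<^sup>2) \<le> ?s"
    using assms by (intro sum_mono) (simp add: power2_eq_square mult_left_le)
  have "(\<Sum>\<xi>\<in>- annihilator H. (cmod (fourier_on H \<phi> \<xi>))\<^sup>2)
      = (\<Sum>\<xi>\<in>UNIV. (cmod (fourier_on H \<phi> \<xi>))\<^sup>2) - (\<Sum>\<xi>\<in>annihilator H. (cmod (fourier_on H \<phi> \<xi>))\<^sup>2)"
    by (simp add: sum.subset_diff[of "annihilator H" UNIV] Compl_eq_Diff_UNIV)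
  also have "\<dots> = ?N * (\<Sum>h\<in>H. (\<phi> h)\<^sup>2) - real (card (annihilator H)) * ?s\<^sup>2"
    using s by (simp add: parseval_fourier_on fourier_on_annihilator flip: of_real_sum)
  also have "\<dots> \<le> ?N * ?s - ?N / ?K * ?s\<^sup>2"
    unfolding card_annihilator_eq using sq by (simp add: mult_left_mono)
  also have "\<dots> = ?N * (?K - ?s) - ?N * (?K - ?s)\<^sup>2 / ?K"
  proof -
    have eq: "N * s - N / K * s\<^sup>2 = N * (K - s) - N * (K - s)\<^sup>2 / K" if "K \<noteq> 0" for N K s :: real
      using that by (simp add: field_simps power2_eq_square)
    show ?thesis
      using K by (intro eq) linarith
  qed
  also have "\<dots> \<le> ?N * (?K - ?s)"
    using K by simp
  finally show ?thesis .
qed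

lemma ap_count_via_nonzero_spectrum:
  "real CARD('n \<Rightarrow> 'p mod_ring) * ((\<Sum>h\<in>H. \<phi> h) ^ 3 / real (card H) - (\<Sum>h\<in>H. \<Sum>d\<in>H. \<phi> h * \<phi> (h + d) * \<phi> (h + d + d)))
    = - Re (\<Sum>\<xi>\<in>- annihilator H. (fourier_on H \<phi> \<xi>)\<^sup>2 * fourier_on H \<phi> (- (\<xi> + \<xi>)))"
proof -
  let ?N = "real CARD('n \<Rightarrow> 'p mod_ring)" and ?K = "real (card H)" and ?s = "\<Sum>h\<in>H. \<phi> h"
  let ?F = "\<lambda>\<xi>. (fourier_on H \<phi> \<xi>)\<^sup>2 * fourier_on H \<phi> (- (\<xi> + \<xi>))"
  have "?F \<xi> = complex_of_real (?s ^ 3)" if "\<xi> \<in> annihilator H" for \<xi>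
  proof -
    have "- (\<xi> + \<xi>) \<in> annihilator H"
      using that by (intro Fp.subspace_neg[OF subspace_annihilator] Fp.subspace_add[OF subspace_annihilator])
    then show ?thesis
      using that by (simp only: fourier_on_annihilator power2_eq_square power3_eq_cube of_real_mult)
  qed
  then have zero_part: "(\<Sum>\<xi>\<in>annihilator H. ?F \<xi>) = complex_of_real (real (card (annihilator H)) * ?s ^ 3)"
    by simp
  have "(\<Sum>\<xi>\<in>UNIV. ?F \<xi>) = (\<Sum>\<xi>\<in>annihilator H. ?F \<xi>) + (\<Sum>\<xi>\<in>- annihilator H. ?F \<xi>)"
    by (simp add: sum.subset_diff[of "annihilator H" UNIV] Compl_eq_Diff_UNIV)
  then have "complex_of_real (?N * (\<Sum>h\<in>H. \<Sum>d\<in>H. \<phi> h * \<phi> (h + d) * \<phi> (h + d + d)))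
      = complex_of_real (real (card (annihilator H)) * ?s ^ 3) + (\<Sum>\<xi>\<in>- annihilator H. ?F \<xi>)"
    by (simp only: sum_fourier_on_ap zero_part of_real_mult of_real_of_nat_eq)
  from arg_cong[OF this, of Re]
  have count: "?N * (\<Sum>h\<in>H. \<Sum>d\<in>H. \<phi> h * \<phi> (h + d) * \<phi> (h + d + d))
      = real (card (annihilator H)) * ?s ^ 3 + Re (\<Sum>\<xi>\<in>- annihilator H. ?F \<xi>)"
    by simp
  have N: "?N = ?K * real (card (annihilator H))"
    by (simp flip: card_mult_card_annihilator)
  have K: "?K \<noteq> 0"
    using card_subspace_gt_0[OF subspace_H] by linarith
  have eq: "N * (s ^ 3 / K - T) = - r"
    if "N * T = A * s ^ 3 + r" "N = K * A" "K \<noteq> 0" for N K A s T r :: real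
  proof -
    have "N * (s ^ 3 / K) = A * s ^ 3"
      using that(2,3) by simp
    then show ?thesis
      using that(1) by (simp add: right_diff_distrib)
  qed
  show ?thesis
    by (rule eq[OF count N K])
qed

lemma ap_deficit_le_nonzero_spectrum:
  "real CARD('n \<Rightarrow> 'p mod_ring) * ((\<Sum>h\<in>H. \<phi> h) ^ 3 / real (card H) - (\<Sum>h\<in>H. \<Sum>d\<in>H. \<phi> h * \<phi> (h + d) * \<phi> (h + d + d)))
    \<le> (\<Sum>\<xi>\<in>- annihilator H. (cmod (fourier_on H \<phi> \<xi>))\<^sup>2 * cmod (fourier_on H \<phi> (- (\<xi> + \<xi>))))"
proof -
  let ?R = "\<Sum>\<xi>\<in>- annihilator H. (fourier_on H \<phi> \<xi>)\<^sup>2 * fourier_on H \<phi> (- (\<xi> + \<xi>))"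
  have "- Re ?R \<le> cmod ?R"
    by (rule order_trans[OF abs_ge_minus_self abs_Re_le_cmod])
  also have "\<dots> \<le> (\<Sum>\<xi>\<in>- annihilator H. (cmod (fourier_on H \<phi> \<xi>))\<^sup>2 * cmod (fourier_on H \<phi> (- (\<xi> + \<xi>))))"
    by (rule order_trans[OF norm_sum]) (simp add: norm_mult norm_power)
  finally show ?thesis
    by (simp only: ap_count_via_nonzero_spectrum)
qed

lemma sum_coset_ap_le:
  assumes f_bounds: "\<And>x. 0 \<le> f x \<and> f x \<le> 1" and "card H \<ge> 2"
  shows "(\<Sum>g\<in>UNIV. \<Sum>h\<in>H. \<Sum>d\<in>H. f (g + h) * f (g + h + d) * f (g + h + d + d)) / real (card H) ^ 2
    \<le> real CARD('n \<Rightarrow> 'p mod_ring) * ap3_density f H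
       + 2 * real CARD('n \<Rightarrow> 'p mod_ring) * (1 - mean f) / real (card H)"
proof -
  let ?N = "real CARD('n \<Rightarrow> 'p mod_ring)" and ?K = "real (card H)"
  let ?P = "\<lambda>x d. f x * f (x + d) * f (x + 2 * d)"
  define D where "D = (\<Sum>x\<in>UNIV. \<Sum>d\<in>H - {0}. ?P x d)"
  define C where "C = (\<Sum>x\<in>UNIV. f x ^ 3)"
  define S where "S = (\<Sum>x\<in>UNIV. f x)"
  have card_H0: "real (card (H - {0})) = ?K - 1"
    using Fp.subspace_0[OF subspace_H] \<open>card H \<ge> 2\<close> by (simp add: of_nat_diff)
  have "(\<Sum>g\<in>UNIV. \<Sum>h\<in>H. \<Sum>d\<in>H. f (g + h) * f (g + h + d) * f (g + h + d + d))
      = (\<Sum>g\<in>UNIV. \<Sum>h\<in>H. \<Sum>d\<in>H. ?P (g + h) d)"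
    by (simp only: mult_2 add.assoc)
  also have "\<dots> = ?K * (\<Sum>x\<in>UNIV. \<Sum>d\<in>H. ?P x d)"
    by (rule sum_cosets[OF subspace_H])
  also have "(\<Sum>x\<in>UNIV. \<Sum>d\<in>H. ?P x d) = D + C"
  proof -
    have "(\<Sum>d\<in>H. ?P x d) = (\<Sum>d\<in>H - {0}. ?P x d) + f x ^ 3" for x
      using Fp.subspace_0[OF subspace_H] by (simp add: sum.remove power3_eq_cube add.commute)
    then show ?thesis
      by (simp add: D_def C_def sum.distrib)
  qed
  finally have count: "(\<Sum>g\<in>UNIV. \<Sum>h\<in>H. \<Sum>d\<in>H. f (g + h) * f (g + h + d) * f (g + h + d + d))
      = ?K * (D + C)" .
  have "f x ^ 3 \<le> f x" for x
  proof -
    have "f x * f x \<le> 1"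
      using f_bounds[of x] by (simp add: mult_le_one)
    then show ?thesis
      using f_bounds[of x] mult_right_mono[of "f x * f x" 1 "f x"] by (simp add: power3_eq_cube)
  qed
  then have C_S: "C \<le> S"
    unfolding C_def S_def by (rule sum_mono)
  have D_lower: "(?K - 1) * (3 * S - 2 * ?N) \<le> D"
    using sum_ap_ge[OF f_bounds, of "H - {0}"] by (simp add: D_def S_def card_H0)
  have ap3: "ap3_density f H = D / (?K - 1) / ?N" and mean: "mean f = S / ?N"
    by (simp_all add: ap3_density_def mean_def D_def S_def card_H0 sum_divide_distrib)
  have K: "2 \<le> ?K"
    using \<open>card H \<ge> 2\<close> by simp
  show ?thesis
    unfolding count ap3 mean by (rule trivial_ap_correction_le[OF K _ C_S D_lower]) simp
qed

end

section \<open>The large spectrum\<close>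

lemma sum_translates_energy_le:
  fixes f :: "('n::finite \<Rightarrow> 'p::prime_card mod_ring) \<Rightarrow> real"
  assumes "\<And>x. 0 \<le> f x \<and> f x \<le> 1"
  shows "(\<Sum>g\<in>UNIV. \<Sum>\<xi>\<in>UNIV. (cmod (fourier_on H (\<lambda>h. f (g + h)) \<xi>))\<^sup>2)
    \<le> real CARD('n \<Rightarrow> 'p mod_ring) * (real CARD('n \<Rightarrow> 'p mod_ring) * real (card H))"
proof -
  have "(\<Sum>h\<in>H. (f (g + h))\<^sup>2) \<le> real (card H)" for g
    using assms sum_mono[of H "\<lambda>h. (f (g + h))\<^sup>2" "\<lambda>_. 1"] by (simp add: power_le_one)
  then show ?thesis
    using sum_mono[of UNIV "\<lambda>g. real CARD('n \<Rightarrow> 'p mod_ring) * (\<Sum>h\<in>H. (f (g + h))\<^sup>2)"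
        "\<lambda>_. real CARD('n \<Rightarrow> 'p mod_ring) * real (card H)"]
    by (simp add: parseval_fourier_on)
qed

text \<open>Frequencies annihilating H may belong to the large spectrum; they are harmless, since
  intersecting H with their annihilator changes nothing.\<close>

definition large_spectrum ::
    "(('n::finite \<Rightarrow> 'p::prime_card mod_ring) \<Rightarrow> real) \<Rightarrow> ('n \<Rightarrow> 'p mod_ring) set \<Rightarrow> real \<Rightarrow> ('n \<Rightarrow> 'p mod_ring) set" where
  "large_spectrum f H \<delta> = {\<eta>. \<exists>g. real (card H) * \<delta> \<le> cmod (fourier_on H (\<lambda>h. f (g + h)) \<eta>)}"

context
  fixes H :: "('n::finite \<Rightarrow> 'p::prime_card mod_ring) set"
  assumes subspace_H: "Fp.subspace H"
begin

lemma norm_fourier_on_shift: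
  assumes "g - g' \<in> H"
  shows "cmod (fourier_on H (\<lambda>h. f (g + h)) \<eta>) = cmod (fourier_on H (\<lambda>h. f (g' + h)) \<eta>)"
proof -
  have "fourier_on H (\<lambda>h. f (g + h)) \<eta> = fourier_on H (\<lambda>h. f (g' + (h + (g - g')))) \<eta>"
    by (simp add: algebra_simps)
  also have "\<dots> = cnj (add_char (dot \<eta> (g - g'))) * fourier_on H (\<lambda>h. f (g' + h)) \<eta>"
    by (rule fourier_on_translate[OF subspace_H assms])
  finally show ?thesis
    by (simp add: norm_mult)
qed

lemma norm_fourier_on_coset:
  assumes "u \<in> H" "\<zeta> \<in> annihilator H"
  shows "cmod (fourier_on H (\<lambda>h. f (u + g + h)) (\<zeta> + \<eta>)) = cmod (fourier_on H (\<lambda>h. f (g + h)) \<eta>)"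
proof -
  have "restrict (dot (\<zeta> + \<eta>)) H = restrict (dot \<eta>) H"
    using assms(2) by (intro restrict_ext) (simp add: dot_add_left annihilator_def)
  then have "fourier_on H (\<lambda>h. f (u + g + h)) (\<zeta> + \<eta>) = fourier_on H (\<lambda>h. f (u + g + h)) \<eta>"
    by (rule fourier_on_restrict_cong[OF subspace_H])
  also have "cmod \<dots> = cmod (fourier_on H (\<lambda>h. f (g + h)) \<eta>)"
    using assms(1) by (intro norm_fourier_on_shift) (simp only: add_diff_cancel_right')
  finally show ?thesis .
qed

lemma card_restrict_large_spectrum:
  assumes "\<delta> > 0" and f_bounds: "\<And>x. 0 \<le> f x \<and> f x \<le> 1"
  shows "real (card ((\<lambda>\<eta>. restrict (dot \<eta>) H) ` large_spectrum f H \<delta>)) * real (card H) * \<delta>\<^sup>2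
    \<le> real CARD('n \<Rightarrow> 'p mod_ring)"
proof -
  let ?N = "real CARD('n \<Rightarrow> 'p mod_ring)" and ?K = "real (card H)"
  let ?R = "(\<lambda>\<eta>. restrict (dot \<eta>) H) ` large_spectrum f H \<delta>"
  let ?E = "\<lambda>(g, \<xi>). (cmod (fourier_on H (\<lambda>h. f (g + h)) \<xi>))\<^sup>2"
  have "\<forall>\<rho>\<in>?R. \<exists>x. restrict (dot (fst x)) H = \<rho> \<and> ?K * \<delta> \<le> cmod (fourier_on H (\<lambda>h. f (snd x + h)) (fst x))"
    by (force simp: large_spectrum_def)
  then obtain rep where rep: "\<And>\<rho>. \<rho> \<in> ?R \<Longrightarrow> restrict (dot (fst (rep \<rho>))) H = \<rho> \<and>
      ?K * \<delta> \<le> cmod (fourier_on H (\<lambda>h. f (snd (rep \<rho>) + h)) (fst (rep \<rho>)))"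
    by metis
  \<comment> \<open>The energy of a large coefficient is repeated over a coset of H in the shift and a coset of
    the annihilator in the frequency.\<close>
  define B where "B \<rho> = ((\<lambda>h. h + snd (rep \<rho>)) ` H) \<times> ((\<lambda>\<zeta>. \<zeta> + fst (rep \<rho>)) ` annihilator H)" for \<rho>
  have card_B: "card (B \<rho>) = CARD('n \<Rightarrow> 'p mod_ring)" for \<rho>
    by (simp add: B_def card_cartesian_product card_image card_mult_card_annihilator[OF subspace_H])
  have B_restrict: "restrict (dot (snd x)) H = \<rho>" if \<rho>: "\<rho> \<in> ?R" and "x \<in> B \<rho>" for \<rho> x
  proof -
    obtain \<zeta> where "\<zeta> \<in> annihilator H" "snd x = \<zeta> + fst (rep \<rho>)"
      using \<open>x \<in> B \<rho>\<close> by (auto simp: B_def)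
    then have "restrict (dot (snd x)) H = restrict (dot (fst (rep \<rho>))) H"
      by (intro restrict_ext) (simp add: dot_add_left annihilator_def)
    with rep[OF \<rho>] show ?thesis
      by simp
  qed
  have energy_B: "(?K * \<delta>)\<^sup>2 \<le> ?E x" if \<rho>: "\<rho> \<in> ?R" and "x \<in> B \<rho>" for \<rho> x
    using \<open>x \<in> B \<rho>\<close> rep[OF \<rho>] \<open>\<delta> > 0\<close>
    by (auto simp: B_def norm_fourier_on_coset intro!: power_mono)
  have "real (card ?R) * ?N * (?K * \<delta>)\<^sup>2 = (\<Sum>\<rho>\<in>?R. \<Sum>x\<in>B \<rho>. (?K * \<delta>)\<^sup>2)"
    by (simp add: card_B)
  also have "\<dots> \<le> (\<Sum>\<rho>\<in>?R. \<Sum>x\<in>B \<rho>. ?E x)"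
    by (intro sum_mono energy_B)
  also have "\<dots> = (\<Sum>x\<in>(\<Union>\<rho>\<in>?R. B \<rho>). ?E x)"
    using B_restrict by (intro sum.UNION_disjoint[symmetric] finite ballI impI) (metis disjoint_iff)
  also have "\<dots> \<le> (\<Sum>x\<in>UNIV. ?E x)"
    by (intro sum_mono2) auto
  also have "\<dots> \<le> ?N * (?N * ?K)"
    using sum_translates_energy_le[of f H] f_bounds
    by (simp add: UNIV_Times_UNIV[symmetric] sum.cartesian_product del: UNIV_Times_UNIV)
  finally have "(real (card ?R) * ?K * \<delta>\<^sup>2) * (?N * ?K) \<le> ?N * (?N * ?K)"
    by (simp add: power2_eq_square mult_ac)
  then show ?thesis
    using card_subspace_gt_0[OF subspace_H] by (simp add: mult_le_cancel_right_pos)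
qed

lemma card_le_card_inter_annihilator:
  "card H \<le> CARD('p) ^ card ((\<lambda>\<eta>. restrict (dot \<eta>) H) ` L) * card (H \<inter> annihilator L)"
proof -
  let ?R = "(\<lambda>\<eta>. restrict (dot \<eta>) H) ` L"
  define \<Phi> where "\<Phi> h = restrict (\<lambda>\<rho>. \<rho> h) ?R" for h
  have "card {x \<in> H. \<Phi> x = v} \<le> card (H \<inter> annihilator L)" if "v \<in> \<Phi> ` H" for v
  proof -
    obtain h where h: "h \<in> H" "v = \<Phi> h"
      using \<open>v \<in> \<Phi> ` H\<close> by blast
    have "x - h \<in> H \<inter> annihilator L" if x: "x \<in> H" "\<Phi> x = \<Phi> h" for x
    proof -
      have "dot \<eta> x = dot \<eta> h" if "\<eta> \<in> L" for \<eta>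
        using fun_cong[OF x(2), of "restrict (dot \<eta>) H"] x(1) h(1) \<open>\<eta> \<in> L\<close> by (simp add: \<Phi>_def)
      then show ?thesis
        using x(1) h(1) Fp.subspace_diff[OF subspace_H]
        by (simp add: annihilator_def dot_commute[of "x - h"] dot_diff_right)
    qed
    then have "{x \<in> H. \<Phi> x = v} \<subseteq> (\<lambda>k. k + h) ` (H \<inter> annihilator L)"
      using h(2) by (auto intro: image_eqI[of _ _ "_ - h"])
    then have "card {x \<in> H. \<Phi> x = v} \<le> card ((\<lambda>k. k + h) ` (H \<inter> annihilator L))"
      by (intro card_mono) simp_all
    also have "\<dots> \<le> card (H \<inter> annihilator L)"
      by (rule card_image_le) simp
    finally show ?thesis .
  qed
  then have "card H \<le> card (\<Phi> ` H) * card (H \<inter> annihilator L)"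
    by (intro card_le_card_image_mult) simp_all
  also have "card (\<Phi> ` H) \<le> card (PiE ?R (\<lambda>_. UNIV :: 'p mod_ring set))"
    by (intro card_mono) (auto simp: \<Phi>_def)
  also have "\<dots> = CARD('p) ^ card ?R"
    by (simp add: card_PiE)
  finally show ?thesis
    by (simp add: mult_right_mono)
qed

lemma codim_inter_annihilator_le:
  "codim (H \<inter> annihilator L) \<le> codim H + card ((\<lambda>\<eta>. restrict (dot \<eta>) H) ` L)"
proof -
  let ?H' = "H \<inter> annihilator L"
  have subspace_H': "Fp.subspace ?H'"
    by (intro Fp.subspace_inter subspace_H subspace_annihilator)
  have "CARD('p) ^ Fp.dim H \<le> CARD('p) ^ (card ((\<lambda>\<eta>. restrict (dot \<eta>) H) ` L) + Fp.dim ?H')"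
    using card_le_card_inter_annihilator[of L]
    by (simp add: card_subspace[OF subspace_H] card_subspace[OF subspace_H'] power_add)
  then have "Fp.dim H \<le> card ((\<lambda>\<eta>. restrict (dot \<eta>) H) ` L) + Fp.dim ?H'"
    using prime_card[where 'a='p] prime_gt_1_nat power_le_imp_le_exp by blast
  then show ?thesis
    using dim_subspace_le[OF subspace_H] dim_subspace_le[OF subspace_H'] by (simp add: codim_def)
qed

lemma codim_large_spectrum_le:
  assumes "\<delta> > 0" and f_bounds: "\<And>x. 0 \<le> f x \<and> f x \<le> 1"
  shows "real (codim (H \<inter> annihilator (large_spectrum f H \<delta>)))
    \<le> real (codim H) + real CARD('p) ^ codim H / \<delta>\<^sup>2"
proof -
  let ?R = "(\<lambda>\<eta>. restrict (dot \<eta>) H) ` large_spectrum f H \<delta>"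
  have "real (card ?R) * real (card H) * \<delta>\<^sup>2 \<le> real CARD('n \<Rightarrow> 'p mod_ring)"
    by (rule card_restrict_large_spectrum) (use assms in auto)
  then have "real (card H) * (real (card ?R) * \<delta>\<^sup>2) \<le> real (card H) * real CARD('p) ^ codim H"
    using card_UNIV_eq_card_subspace_codim[OF subspace_H] by (simp add: mult_ac)
  then have "real (card ?R) * \<delta>\<^sup>2 \<le> real CARD('p) ^ codim H"
    using card_subspace_gt_0[OF subspace_H] by (simp add: mult_le_cancel_left_pos)
  then have "real (card ?R) \<le> real CARD('p) ^ codim H / \<delta>\<^sup>2"
    using \<open>\<delta> > 0\<close> by (simp add: pos_le_divide_eq)
  then show ?thesis
    using codim_inter_annihilator_le[of "large_spectrum f H \<delta>"] by linarith
qed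

end

section \<open>The density increment\<close>

context
  fixes H H' :: "('n::finite \<Rightarrow> 'p::prime_card mod_ring) set"
  assumes subspace_H: "Fp.subspace H" and subspace_H': "Fp.subspace H'" and H'_subset: "H' \<subseteq> H"
begin

lemma fourier_on_coset_density:
  assumes "\<xi> \<in> annihilator H'" and "\<xi> \<notin> annihilator H"
  shows "fourier_on H (\<lambda>h. coset_density \<phi> H' h - c) \<xi> = fourier_on H \<phi> \<xi>"
proof -
  have "fourier_on H (\<lambda>h. coset_density \<phi> H' h - c) \<xi> = fourier_on H (coset_density \<phi> H') \<xi>"
    using fourier_on_diff_const[OF subspace_H assms(2)] by simp
  also have "\<dots> = (\<Sum>h'\<in>H'. fourier_on H (\<lambda>h. \<phi> (h + h')) \<xi>) / of_nat (card H')"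
    by (simp add: fourier_on_def coset_density_eq[OF subspace_H'] sum_divide_distrib
        sum_distrib_right sum.swap[of _ H'] add.commute)
  also have "\<dots> = (\<Sum>h'\<in>H'. fourier_on H \<phi> \<xi>) / of_nat (card H')"
    using assms(1) H'_subset
    by (intro arg_cong[where f="\<lambda>x. x / _"] sum.cong refl)
      (auto simp: fourier_on_translate[OF subspace_H] annihilator_def)
  also have "\<dots> = fourier_on H \<phi> \<xi>"
    using Fp.subspace_0[OF subspace_H'] by auto
  finally show ?thesis .
qed

lemma norm_fourier_on_double_le:
  assumes \<phi>_bounds: "\<And>x. 0 \<le> \<phi> x \<and> \<phi> x \<le> 1" and "\<delta> \<ge> 0"
    and two: "(2 :: 'p mod_ring) \<noteq> 0"
    and large: "\<And>\<eta>. \<eta> \<notin> annihilator H \<Longrightarrow> real (card H) * \<delta> \<le> cmod (fourier_on H \<phi> \<eta>) \<Longrightarrow>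
      \<eta> \<in> annihilator H'"
    and "\<xi> \<notin> annihilator H"
  shows "cmod (fourier_on H \<phi> (- (\<xi> + \<xi>)))
    \<le> real (card H) * \<delta> + (if \<xi> \<in> annihilator H' then real (card H) - (\<Sum>h\<in>H. \<phi> h) else 0)"
proof -
  have "(\<Sum>h\<in>H. \<phi> h) \<le> real (card H)"
    using \<phi>_bounds sum_mono[of H \<phi> "\<lambda>_. 1"] by auto
  have "- (\<xi> + \<xi>) \<notin> annihilator H"
    using \<open>\<xi> \<notin> annihilator H\<close> annihilator_double_iff[OF two] by blast
  then have bound: "cmod (fourier_on H \<phi> (- (\<xi> + \<xi>))) \<le> real (card H) - (\<Sum>h\<in>H. \<phi> h)"
    using norm_fourier_on_le[OF subspace_H, of "- (\<xi> + \<xi>)" \<phi>] \<phi>_bounds by simp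
  show ?thesis
  proof (cases "real (card H) * \<delta> \<le> cmod (fourier_on H \<phi> (- (\<xi> + \<xi>)))")
    case True
    then have "\<xi> \<in> annihilator H'"
      using large \<open>- (\<xi> + \<xi>) \<notin> annihilator H\<close> annihilator_double_iff[OF two] by blast
    moreover have "0 \<le> real (card H) * \<delta>"
      using \<open>\<delta> \<ge> 0\<close> by simp
    ultimately show ?thesis
      using bound by (simp add: add_increasing)
  next
    case False
    then show ?thesis
      using \<open>(\<Sum>h\<in>H. \<phi> h) \<le> real (card H)\<close> by auto
  qed
qed

lemma ap_deficit_le:
  assumes \<phi>_bounds: "\<And>x. 0 \<le> \<phi> x \<and> \<phi> x \<le> 1" and "\<delta> \<ge> 0"
    and two: "(2 :: 'p mod_ring) \<noteq> 0"
    and large: "\<And>\<eta>. \<eta> \<notin> annihilator H \<Longrightarrow> real (card H) * \<delta> \<le> cmod (fourier_on H \<phi> \<eta>) \<Longrightarrow>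
      \<eta> \<in> annihilator H'"
  defines "a \<equiv> (\<Sum>h\<in>H. \<phi> h) / real (card H)"
  shows "real (card H) ^ 2 * a ^ 3 - (\<Sum>h\<in>H. \<Sum>d\<in>H. \<phi> h * \<phi> (h + d) * \<phi> (h + d + d))
    \<le> real (card H) ^ 2 * \<delta> * (1 - a) + real (card H) * (1 - a) * (\<Sum>h\<in>H. (coset_density \<phi> H' h - a)\<^sup>2)"
proof -
  let ?N = "real CARD('n \<Rightarrow> 'p mod_ring)" and ?K = "real (card H)"
  let ?F = "fourier_on H \<phi>" and ?F' = "fourier_on H (\<lambda>h. coset_density \<phi> H' h - a)"
  have K: "?K > 0"
    using card_subspace_gt_0[OF subspace_H] by simp
  have sum_\<phi>: "(\<Sum>h\<in>H. \<phi> h) = ?K * a"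
    using K by (simp add: a_def)
  have "(\<Sum>h\<in>H. \<phi> h) \<le> ?K"
    using \<phi>_bounds sum_mono[of H \<phi> "\<lambda>_. 1"] by auto
  then have "a \<le> 1"
    using K by (simp add: a_def)
  \<comment> \<open>A nonzero frequency \<xi> either contributes little through the factor at -2\<xi>, or it
    annihilates H', and then its coefficient is that of the H'-averaged function.\<close>
  have "(\<Sum>h\<in>H. \<phi> h) ^ 3 / ?K = ?K ^ 2 * a ^ 3"
    using K by (simp add: sum_\<phi> power3_eq_cube power2_eq_square)
  then have "?N * (?K ^ 2 * a ^ 3 - (\<Sum>h\<in>H. \<Sum>d\<in>H. \<phi> h * \<phi> (h + d) * \<phi> (h + d + d)))
      \<le> (\<Sum>\<xi>\<in>- annihilator H. (cmod (?F \<xi>))\<^sup>2 * cmod (?F (- (\<xi> + \<xi>))))"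
    using ap_deficit_le_nonzero_spectrum[OF subspace_H, of \<phi>] by simp
  also have "\<dots> \<le> (\<Sum>\<xi>\<in>- annihilator H. ?K * \<delta> * (cmod (?F \<xi>))\<^sup>2 +
      ?K * (1 - a) * (if \<xi> \<in> annihilator H' then (cmod (?F' \<xi>))\<^sup>2 else 0))"
  proof (rule sum_mono)
    fix \<xi> assume "\<xi> \<in> - annihilator H"
    then have "(cmod (?F \<xi>))\<^sup>2 * cmod (?F (- (\<xi> + \<xi>)))
        \<le> (cmod (?F \<xi>))\<^sup>2 * (?K * \<delta> + (if \<xi> \<in> annihilator H' then ?K * (1 - a) else 0))"
      using norm_fourier_on_double_le[where \<phi>=\<phi> and \<delta>=\<delta> and \<xi>=\<xi>, OF \<phi>_bounds \<open>\<delta> \<ge> 0\<close> two large] sum_\<phi>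
      by (intro mult_left_mono) (auto simp: algebra_simps)
    also have "\<dots> = ?K * \<delta> * (cmod (?F \<xi>))\<^sup>2 +
        ?K * (1 - a) * (if \<xi> \<in> annihilator H' then (cmod (?F' \<xi>))\<^sup>2 else 0)"
      using fourier_on_coset_density \<open>\<xi> \<in> - annihilator H\<close> by (simp add: algebra_simps)
    finally show "(cmod (?F \<xi>))\<^sup>2 * cmod (?F (- (\<xi> + \<xi>))) \<le> \<dots>" .
  qed
  also have "\<dots> \<le> ?K * \<delta> * (?N * (?K * (1 - a))) + ?K * (1 - a) * (\<Sum>\<xi>\<in>UNIV. (cmod (?F' \<xi>))\<^sup>2)"
  proof -
    have "(\<Sum>\<xi>\<in>- annihilator H. (cmod (?F \<xi>))\<^sup>2) \<le> ?N * (?K * (1 - a))"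
      using nonzero_spectrum_energy_le[OF subspace_H, of \<phi>, OF \<phi>_bounds] sum_\<phi> by (simp add: algebra_simps)
    moreover have "(\<Sum>\<xi>\<in>- annihilator H. if \<xi> \<in> annihilator H' then (cmod (?F' \<xi>))\<^sup>2 else 0)
        \<le> (\<Sum>\<xi>\<in>UNIV. (cmod (?F' \<xi>))\<^sup>2)"
      by (rule order_trans[OF sum_mono sum_mono2]) auto
    ultimately show ?thesis
      using \<open>\<delta> \<ge> 0\<close> K \<open>a \<le> 1\<close> by (simp add: sum.distrib sum_distrib_left[symmetric] add_mono mult_left_mono)
  qed
  also have "\<dots> = ?N * (?K ^ 2 * \<delta> * (1 - a) + ?K * (1 - a) * (\<Sum>h\<in>H. (coset_density \<phi> H' h - a)\<^sup>2))"
    by (simp only: parseval_fourier_on) (simp add: algebra_simps power2_eq_square)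
  finally show ?thesis
    by (simp add: mult_le_cancel_left_pos)
qed

lemma sum_coset_density_refine_eq:
  "(\<Sum>h\<in>H. coset_density f H' (g + h)) = real (card H) * coset_density f H g"
  using card_subspace_gt_0[OF subspace_H]
  by (simp add: sum_coset_density_refine[OF subspace_H subspace_H' H'_subset] coset_density_eq[OF subspace_H])

lemma refinement_variance_le:
  assumes "\<And>x. 0 \<le> f x \<and> f x \<le> 1"
  shows "refinement_variance f H H' g \<le> coset_density f H g * (1 - coset_density f H g)"
proof -
  have "(\<Sum>h\<in>H. (coset_density f H' (g + h) - coset_density f H g)\<^sup>2)
      \<le> real (card H) * coset_density f H g * (1 - coset_density f H g)"
    using coset_density_bounds[OF subspace_H' assms]
    by (intro sum_sq_deviation_le sum_coset_density_refine_eq) auto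
  moreover have K: "real (card H) > 0"
    using card_subspace_gt_0[OF subspace_H] by simp
  ultimately show ?thesis
    by (simp only: refinement_variance_def pos_divide_le_eq[OF K] mult_ac)
qed

lemma mean_cube_increment:
  assumes "\<And>x. 0 \<le> f x"
  shows "2 * (\<Sum>g\<in>UNIV. coset_density f H g * refinement_variance f H H' g)
    \<le> real CARD('n \<Rightarrow> 'p mod_ring) * (mean_cube f H' - mean_cube f H)"
proof -
  let ?K = "real (card H)" and ?a = "coset_density f H" and ?a' = "coset_density f H'"
  have "?K * (2 * ?a g * refinement_variance f H H' g) \<le> (\<Sum>h\<in>H. ?a' (g + h) ^ 3) - ?K * ?a g ^ 3" for g
  proof -
    have "0 \<le> ?a' x" for x
      using assms by (simp add: coset_density_eq[OF subspace_H'] sum_nonneg)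
    then have "2 * ?a g * (\<Sum>h\<in>H. (?a' (g + h) - ?a g)\<^sup>2) \<le> (\<Sum>h\<in>H. ?a' (g + h) ^ 3) - ?K * ?a g ^ 3"
      by (intro sum_cube_ge_sq_deviation sum_coset_density_refine_eq)
    then show ?thesis
      using card_subspace_gt_0[OF subspace_H] by (simp add: refinement_variance_def)
  qed
  then have "?K * (2 * (\<Sum>g\<in>UNIV. ?a g * refinement_variance f H H' g))
      \<le> (\<Sum>g\<in>UNIV. (\<Sum>h\<in>H. ?a' (g + h) ^ 3) - ?K * ?a g ^ 3)"
    by (simp add: sum_distrib_left sum_mono mult_ac)
  also have "\<dots> = ?K * (\<Sum>x\<in>UNIV. ?a' x ^ 3) - ?K * (\<Sum>g\<in>UNIV. ?a g ^ 3)"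
    by (simp add: sum_subtractf sum_cosets[OF subspace_H, of "\<lambda>x. ?a' x ^ 3"] sum_distrib_left)
  also have "\<dots> = ?K * (real CARD('n \<Rightarrow> 'p mod_ring) * (mean_cube f H' - mean_cube f H))"
    by (simp add: mean_cube_def right_diff_distrib)
  finally show ?thesis
    using card_subspace_gt_0[OF subspace_H] by (simp add: mult_le_cancel_left_pos)
qed

lemma coset_ap_deficit_le:
  assumes f_bounds: "\<And>x. 0 \<le> f x \<and> f x \<le> 1" and "\<delta> \<ge> 0" and two: "(2 :: 'p mod_ring) \<noteq> 0"
    and large: "\<And>\<eta>. \<eta> \<notin> annihilator H \<Longrightarrow> real (card H) * \<delta> \<le> cmod (fourier_on H (\<lambda>x. f (g + x)) \<eta>) \<Longrightarrow>
      \<eta> \<in> annihilator H'"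
  shows "coset_density f H g ^ 3
      - (\<Sum>h\<in>H. \<Sum>d\<in>H. f (g + h) * f (g + h + d) * f (g + h + d + d)) / real (card H) ^ 2
    \<le> \<delta> * (1 - coset_density f H g) + (1 - coset_density f H g) * refinement_variance f H H' g"
proof -
  let ?K = "real (card H)" and ?a = "coset_density f H g"
  let ?T = "\<Sum>h\<in>H. \<Sum>d\<in>H. f (g + h) * f (g + h + d) * f (g + h + d + d)"
  let ?S = "\<Sum>h\<in>H. (coset_density f H' (g + h) - ?a)\<^sup>2"
  have deficit: "?K ^ 2 * ?a ^ 3 - ?T \<le> ?K ^ 2 * \<delta> * (1 - ?a) + ?K * (1 - ?a) * ?S"
    using ap_deficit_le[of "\<lambda>x. f (g + x)" \<delta>] f_bounds \<open>\<delta> \<ge> 0\<close> two large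
    by (simp add: coset_density_eq[OF subspace_H, symmetric] coset_density_translate[OF subspace_H'] add.assoc)
  have K: "?K > 0"
    using card_subspace_gt_0[OF subspace_H] by simp
  have "?a ^ 3 - ?T / ?K ^ 2 = (?K ^ 2 * ?a ^ 3 - ?T) / ?K ^ 2"
    using subspace_nonempty[OF subspace_H] by (simp add: diff_divide_distrib)
  also have "\<dots> \<le> (?K ^ 2 * \<delta> * (1 - ?a) + ?K * (1 - ?a) * ?S) / ?K ^ 2"
    by (rule divide_right_mono[OF deficit]) simp
  also have "\<dots> = \<delta> * (1 - ?a) + (1 - ?a) * (?S / ?K)"
    using subspace_nonempty[OF subspace_H] by (simp add: add_divide_distrib power2_eq_square)
  finally show ?thesis
    by (simp add: refinement_variance_def)
qed

lemma sum_coset_ap_deficit_le: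
  fixes f :: "('n \<Rightarrow> 'p mod_ring) \<Rightarrow> real"
  assumes f_bounds: "\<And>x. 0 \<le> f x \<and> f x \<le> 1" and "\<delta> \<ge> 0" and two: "(2 :: 'p mod_ring) \<noteq> 0"
    and large: "\<And>g \<eta>. \<eta> \<notin> annihilator H \<Longrightarrow>
      real (card H) * \<delta> \<le> cmod (fourier_on H (\<lambda>x. f (g + x)) \<eta>) \<Longrightarrow> \<eta> \<in> annihilator H'"
  shows "mean_cube f H
      - (\<Sum>g\<in>UNIV. \<Sum>h\<in>H. \<Sum>d\<in>H. f (g + h) * f (g + h + d) * f (g + h + d + d))
        / real (card H) ^ 2 / real CARD('n \<Rightarrow> 'p mod_ring)
    \<le> \<delta> * (1 - mean f)
      + (\<Sum>g\<in>UNIV. (1 - coset_density f H g) * refinement_variance f H H' g) / real CARD('n \<Rightarrow> 'p mod_ring)"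
proof -
  let ?N = "real CARD('n \<Rightarrow> 'p mod_ring)" and ?K = "real (card H)"
  let ?a = "coset_density f H" and ?V = "refinement_variance f H H'"
  let ?T = "\<lambda>g. \<Sum>h\<in>H. \<Sum>d\<in>H. f (g + h) * f (g + h + d) * f (g + h + d + d)"
  have N: "?N > 0"
    by simp
  have "?N * (mean_cube f H - (\<Sum>g\<in>UNIV. ?T g) / ?K ^ 2 / ?N)
      = (\<Sum>g\<in>UNIV. ?a g ^ 3) - (\<Sum>g\<in>UNIV. ?T g) / ?K ^ 2"
    using N by (simp add: mean_cube_def right_diff_distrib)
  also have "\<dots> = (\<Sum>g\<in>UNIV. ?a g ^ 3 - ?T g / ?K ^ 2)"
    by (simp add: sum_subtractf sum_divide_distrib)
  also have "\<dots> \<le> (\<Sum>g\<in>UNIV. \<delta> * (1 - ?a g) + (1 - ?a g) * ?V g)"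
    using f_bounds \<open>\<delta> \<ge> 0\<close> two large by (intro sum_mono coset_ap_deficit_le) auto
  also have "\<dots> = \<delta> * (\<Sum>g\<in>UNIV. 1 - ?a g) + (\<Sum>g\<in>UNIV. (1 - ?a g) * ?V g)"
    by (simp add: sum.distrib sum_distrib_left)
  also have "(\<Sum>g\<in>UNIV. 1 - ?a g) = ?N * (1 - mean f)"
    by (simp add: sum_subtractf sum_coset_density[OF subspace_H] mean_def right_diff_distrib)
  also have "\<delta> * (?N * (1 - mean f)) + (\<Sum>g\<in>UNIV. (1 - ?a g) * ?V g)
      = ?N * (\<delta> * (1 - mean f) + (\<Sum>g\<in>UNIV. (1 - ?a g) * ?V g) / ?N)"
    using N by (simp add: field_simps)
  finally show ?thesis
    using N by (simp only: mult_le_cancel_left_pos)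
qed

lemma sum_variance_deficit_tradeoff:
  fixes f :: "('n \<Rightarrow> 'p mod_ring) \<Rightarrow> real"
  assumes f_bounds: "\<And>x. 0 \<le> f x \<and> f x \<le> 1" and \<gamma>: "0 < 1 - mean f" "1 - mean f \<le> 1/60"
  shows "36/713 * ((\<Sum>g\<in>UNIV. (1 - coset_density f H g) * refinement_variance f H H' g) / real CARD('n \<Rightarrow> 'p mod_ring))
    \<le> (1 - mean f) * (2 * (\<Sum>g\<in>UNIV. coset_density f H g * refinement_variance f H H' g) / real CARD('n \<Rightarrow> 'p mod_ring))
      + (36/713 - 1/36) * (mean_cube f H - mean f ^ 3)"
proof -
  let ?N = "real CARD('n \<Rightarrow> 'p mod_ring)" and ?\<gamma> = "1 - mean f"
  let ?a = "coset_density f H" and ?V = "refinement_variance f H H'"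
  let ?X = "\<Sum>g\<in>UNIV. (1 - ?a g) * ?V g" and ?Y = "\<Sum>g\<in>UNIV. ?a g * ?V g"
  let ?Z = "\<Sum>g\<in>UNIV. (?a g - mean f)\<^sup>2 * (?a g + 2 * mean f)"
  have a_bounds: "0 \<le> ?a g" "?a g \<le> 1" for g
    using coset_density_bounds[OF subspace_H, where f=f, OF f_bounds] by auto
  have "36/713 * (1 - ?a g) * ?V g
      \<le> 2 * ?\<gamma> * ?a g * ?V g + (36/713 - 1/36) * (?a g - (1 - ?\<gamma>))\<^sup>2 * (?a g + 2 * (1 - ?\<gamma>))" for g
    by (rule variance_deficit_tradeoff[OF a_bounds refinement_variance_nonneg
        refinement_variance_le[where f=f, OF f_bounds] \<gamma>]) simp_all
  then have "(\<Sum>g\<in>UNIV. 36/713 * (1 - ?a g) * ?V g)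
      \<le> (\<Sum>g\<in>UNIV. 2 * ?\<gamma> * ?a g * ?V g + (36/713 - 1/36) * (?a g - (1 - ?\<gamma>))\<^sup>2 * (?a g + 2 * (1 - ?\<gamma>)))"
    by (rule sum_mono)
  then have "36/713 * ?X \<le> 2 * (?\<gamma> * ?Y) + (36/713 - 1/36) * ?Z"
    by (simp only: sum.distrib mult.assoc diff_diff_eq2 add_diff_cancel_left' flip: sum_distrib_left)
  then have "36/713 * ?X / ?N \<le> (2 * (?\<gamma> * ?Y) + (36/713 - 1/36) * ?Z) / ?N"
    by (intro divide_right_mono) simp_all
  also have "\<dots> = ?\<gamma> * (2 * ?Y / ?N) + (36/713 - 1/36) * (mean_cube f H - mean f ^ 3)"
    by (simp add: mean_cube_sub_cube_mean[OF subspace_H, symmetric] add_divide_distrib)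
  finally show ?thesis
    by simp
qed

lemma density_increment:
  fixes f :: "('n \<Rightarrow> 'p mod_ring) \<Rightarrow> real"
  assumes f_bounds: "\<And>x. 0 \<le> f x \<and> f x \<le> 1" and two: "(2 :: 'p mod_ring) \<noteq> 0"
    and \<gamma>: "0 < 1 - mean f" "1 - mean f \<le> 1/60" and "\<epsilon> > 0"
    and K: "4 / \<epsilon> < real (card H)" "card H \<ge> 2"
    and ap3: "ap3_density f H < mean f ^ 3 - \<epsilon>"
    and large: "\<And>g \<eta>. \<eta> \<notin> annihilator H \<Longrightarrow>
      real (card H) * (\<epsilon> / 12) \<le> cmod (fourier_on H (\<lambda>x. f (g + x)) \<eta>) \<Longrightarrow> \<eta> \<in> annihilator H'"
  shows "(1 + 1 / (36 * (1 - mean f))) * (mean_cube f H - mean f ^ 3) + \<epsilon> / (20 * (1 - mean f))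
    \<le> mean_cube f H' - mean f ^ 3"
proof -
  let ?N = "real CARD('n \<Rightarrow> 'p mod_ring)" and ?K = "real (card H)"
  let ?T = "\<Sum>g\<in>UNIV. \<Sum>h\<in>H. \<Sum>d\<in>H. f (g + h) * f (g + h + d) * f (g + h + d + d)"
  have deficit: "mean_cube f H - ?T / ?K ^ 2 / ?N \<le> \<epsilon> / 12 * (1 - mean f)
      + (\<Sum>g\<in>UNIV. (1 - coset_density f H g) * refinement_variance f H H' g) / ?N"
    using \<open>\<epsilon> > 0\<close> by (intro sum_coset_ap_deficit_le f_bounds two large) simp_all
  have "?T / ?K ^ 2 \<le> ?N * ap3_density f H + 2 * ?N * (1 - mean f) / ?K"
    by (rule sum_coset_ap_le[OF subspace_H, where f=f, OF f_bounds K(2)])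
  also have "\<dots> = (ap3_density f H + 2 * (1 - mean f) / ?K) * ?N"
    by (simp add: algebra_simps)
  finally have ap: "?T / ?K ^ 2 / ?N \<le> ap3_density f H + 2 * (1 - mean f) / ?K"
    by (rule pos_divide_le_eq[THEN iffD2, rotated]) simp
  have increment: "2 * (\<Sum>g\<in>UNIV. coset_density f H g * refinement_variance f H H' g) / ?N
      \<le> mean_cube f H' - mean_cube f H"
    using mean_cube_increment[of f] f_bounds by (simp add: field_simps)
  show ?thesis
    by (rule density_increment_arith[OF deficit ap sum_variance_deficit_tradeoff[OF f_bounds \<gamma>]
          increment ap3 K(1) \<open>\<epsilon> > 0\<close> \<gamma>])
qed

end

lemma two_neq_zero_mod_ring: "odd CARD('p) \<Longrightarrow> (2 :: 'p::prime_card mod_ring) \<noteq> 0"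
proof
  assume "odd CARD('p)" and "(2 :: 'p mod_ring) = 0"
  then have "CARD('p) dvd 2"
    using of_nat_0_mod_ring_dvd[of 2, where 'a='p] by simp
  then have "CARD('p) \<le> 2"
    by (rule dvd_imp_le) simp
  moreover have "CARD('p) > 1"
    using prime_card prime_gt_1_nat by blast
  ultimately show False
    using \<open>odd CARD('p)\<close> by (simp add: le_less)
qed

theorem lemma16:
  fixes f :: "('n::finite \<Rightarrow> 'p::prime_card mod_ring) \<Rightarrow> real"
    and H :: "('n \<Rightarrow> 'p mod_ring) set"
    and \<alpha> \<gamma> \<epsilon> :: real
  assumes p_odd: "odd CARD('p)"
    and f_range: "\<And>x. 0 \<le> f x \<and> f x \<le> 1"
    and alpha_def: "\<alpha> = mean f"
    and alpha_ge: "\<alpha> \<ge> 59/60"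
    and gamma_def: "\<gamma> = 1 - \<alpha>"
    and gamma_pos: "\<gamma> > 0"
    and eps_pos: "\<epsilon> > 0"
    and H_sub: "Fp.subspace H"
    and H_card: "real (card H) > max (1 / \<gamma> ^ 3) (4 / \<epsilon>)"
    and lam: "ap3_density f H < \<alpha> ^ 3 - \<epsilon>"
  shows "\<exists>H'. Fp.subspace H' \<and> H' \<subseteq> H \<and>
     real (codim H') \<le> real (codim H) + real CARD('p) ^ codim H * 144 / \<epsilon> ^ 2 \<and>
     mean_cube f H' - \<alpha> ^ 3 \<ge> (1 + 1 / (36 * \<gamma>)) * (mean_cube f H - \<alpha> ^ 3) + \<epsilon> / (20 * \<gamma>)"
proof -
  define H' where "H' = H \<inter> annihilator (large_spectrum f H (\<epsilon> / 12))"
  have subspace_H': "Fp.subspace H'" and "H' \<subseteq> H"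
    by (auto simp: H'_def intro: Fp.subspace_inter H_sub subspace_annihilator)
  have "1 \<le> 1 / \<gamma> ^ 3"
    using gamma_pos alpha_ge gamma_def by (simp add: power_le_one)
  then have "card H \<ge> 2"
    using H_card by linarith
  have "real (codim H') \<le> real (codim H) + real CARD('p) ^ codim H * 144 / \<epsilon> ^ 2"
    using codim_large_spectrum_le[OF H_sub, where f=f and \<delta>="\<epsilon> / 12", OF _ f_range] eps_pos
    by (simp add: H'_def power_divide)
  moreover have "(1 + 1 / (36 * \<gamma>)) * (mean_cube f H - \<alpha> ^ 3) + \<epsilon> / (20 * \<gamma>) \<le> mean_cube f H' - \<alpha> ^ 3"
    using density_increment[OF H_sub subspace_H' \<open>H' \<subseteq> H\<close>, where f=f, OF f_range two_neq_zero_mod_ring[OF p_odd]]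
      alpha_def alpha_ge gamma_def gamma_pos eps_pos H_card \<open>card H \<ge> 2\<close> lam
    by (force simp: H'_def annihilator_def large_spectrum_def dot_commute)
  ultimately show ?thesis
    using subspace_H' \<open>H' \<subseteq> H\<close> by blast
qed

end
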